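(* Let $\mathcal G$ be an étale groupoid, $Z$ a locally compact Hausdorff proper $\mathcal G$-compact $\mathcal G$-space, $K_1,K_2$ compact subsets of $\mathcal G$, and $\phi_1:Z\to P_{K_1}(\mathcal G)$, $\phi_2:Z\to P_{K_2}(\mathcal G)$ $\mathcal G$-equivariant continuous maps. Then there exists a compact subset $K\supseteq K_1\cup K_2$ of $\mathcal G$ such that $\iota_{K_1,K}\circ\phi_1$ and $\iota_{K_2,K}\circ\phi_2$ are $\mathcal G$-equivariantly homotopic maps $Z\to P_K(\mathcal G)$.
   Context: Étale groupoids are locally compact Hausdorff with range map a local homeomorphism. $P(\mathcal G)$ is the space of positive Radon measures $\mu$ on $\mathcal G$ with $\mu(\mathcal G)=1$ and support contained in a single fibre $r^{-1}(x)$, with the weak-$*$ topology from $C_c(\mathcal G,\mathbb R)$ and $\mathcal G$-action by left translation, $\gamma(\sum c_i\delta_{\gamma_i})=\sum c_i\delta_{\gamma\gamma_i}$. For compact $K\subseteq\mathcal G$, $P_K(\mathcal G)$ is the subspace of finitely supported $\mu\in P(\mathcal G)$ whose support $\delta$ satisfies $r(\gamma_1)=r(\gamma_2)$ and $\gamma_1^{-1}\gamma_2\in K$ for all $\gamma_1,\gamma_2\in\delta$ (the geometric realization of the Rips complex). For $K'\subseteq K$, $\iota_{K',K}:P_{K'}(\mathcal G)\hookrightarrow P_K(\mathcal G)$ is the inclusion. A $\mathcal G$-space is $\mathcal G$-compact if it is $\mathcal GC$ for some compact $C$; a $\mathcal G$-homotopy is a $\mathcal G$-equivariant continuous map $[0,1]\times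 Z\to P_K(\mathcal G)$. *)

theory Defs
  imports "HOL-Analysis.Analysis"
begin

text \<open>An (abstract) topological groupoid: the arrow space is the topological space TG
  (its carrier topspace TG is the set of arrows), with range r, source s, partial
  multiplication gmul (defined on pairs g h with s g = r h) and inverse ginv.\<close>

definition composable :: "'g topology \<Rightarrow> ('g \<Rightarrow> 'g) \<Rightarrow> ('g \<Rightarrow> 'g) \<Rightarrow> ('g \<times> 'g) set" where
  "composable TG r s = {(g, h). g \<in> topspace TG \<and> h \<in> topspace TG \<and> s g = r h}"

definition groupoid_axioms ::
  "'g topology \<Rightarrow> ('g \<Rightarrow> 'g) \<Rightarrow> ('g \<Rightarrow> 'g) \<Rightarrow> ('g \<Rightarrow> 'g \<Rightarrow> 'g) \<Rightarrow> ('g \<Rightarrow> 'g) \<Rightarrow> bool" where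
  "groupoid_axioms TG r s gmul ginv \<longleftrightarrow>
     (\<forall>g\<in>topspace TG. r g \<in> topspace TG \<and> s g \<in> topspace TG \<and> ginv g \<in> topspace TG) \<and>
     (\<forall>g\<in>topspace TG. r (r g) = r g \<and> s (r g) = r g \<and> r (s g) = s g \<and> s (s g) = s g) \<and>
     (\<forall>g\<in>topspace TG. \<forall>h\<in>topspace TG. s g = r h \<longrightarrow>
         gmul g h \<in> topspace TG \<and> r (gmul g h) = r g \<and> s (gmul g h) = s h) \<and>
     (\<forall>g\<in>topspace TG. \<forall>h\<in>topspace TG. \<forall>k\<in>topspace TG. s g = r h \<longrightarrow> s h = r k \<longrightarrow>
         gmul (gmul g h) k = gmul g (gmul h k)) \<and>
     (\<forall>g\<in>topspace TG. gmul (r g) g = g \<and> gmul g (s g) = g) \<and>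
     (\<forall>g\<in>topspace TG. r (ginv g) = s g \<and> s (ginv g) = r g \<and>
         gmul g (ginv g) = r g \<and> gmul (ginv g) g = s g)"

definition etale_groupoid ::
  "'g topology \<Rightarrow> ('g \<Rightarrow> 'g) \<Rightarrow> ('g \<Rightarrow> 'g) \<Rightarrow> ('g \<Rightarrow> 'g \<Rightarrow> 'g) \<Rightarrow> ('g \<Rightarrow> 'g) \<Rightarrow> bool" where
  "etale_groupoid TG r s gmul ginv \<longleftrightarrow>
     groupoid_axioms TG r s gmul ginv \<and>
     Hausdorff_space TG \<and> locally_compact_space TG \<and>
     continuous_map TG TG ginv \<and>
     continuous_map (subtopology (prod_topology TG TG) (composable TG r s)) TG (\<lambda>(g, h). gmul g h) \<and>
     continuous_map TG TG r \<and> continuous_map TG TG s \<and>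
     (\<forall>g\<in>topspace TG. \<exists>V. openin TG V \<and> g \<in> V \<and> openin TG (r ` V) \<and>
         homeomorphic_map (subtopology TG V) (subtopology TG (r ` V)) r)"

definition action_domain ::
  "'g topology \<Rightarrow> ('g \<Rightarrow> 'g) \<Rightarrow> 'z topology \<Rightarrow> ('z \<Rightarrow> 'g) \<Rightarrow> ('g \<times> 'z) set" where
  "action_domain TG s TZ p = {(g, z). g \<in> topspace TG \<and> z \<in> topspace TZ \<and> s g = p z}"

definition G_space ::
  "'g topology \<Rightarrow> ('g \<Rightarrow> 'g) \<Rightarrow> ('g \<Rightarrow> 'g) \<Rightarrow> ('g \<Rightarrow> 'g \<Rightarrow> 'g) \<Rightarrow>
   'z topology \<Rightarrow> ('z \<Rightarrow> 'g) \<Rightarrow> ('g \<Rightarrow> 'z \<Rightarrow> 'z) \<Rightarrow> bool" where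
  "G_space TG r s gmul TZ p act \<longleftrightarrow>
     continuous_map TZ (subtopology TG (r ` topspace TG)) p \<and>
     continuous_map (subtopology (prod_topology TG TZ) (action_domain TG s TZ p)) TZ
        (\<lambda>(g, z). act g z) \<and>
     (\<forall>(g, z)\<in>action_domain TG s TZ p. act g z \<in> topspace TZ \<and> p (act g z) = r g) \<and>
     (\<forall>z\<in>topspace TZ. act (p z) z = z) \<and>
     (\<forall>g\<in>topspace TG. \<forall>h\<in>topspace TG. \<forall>z\<in>topspace TZ. s g = r h \<longrightarrow> s h = p z \<longrightarrow>
         act g (act h z) = act (gmul g h) z)"

definition proper_action ::
  "'g topology \<Rightarrow> ('g \<Rightarrow> 'g) \<Rightarrow> 'z topology \<Rightarrow> ('z \<Rightarrow> 'g) \<Rightarrow> ('g \<Rightarrow> 'z \<Rightarrow> 'z) \<Rightarrow> bool" where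
  "proper_action TG s TZ p act \<longleftrightarrow>
     proper_map (subtopology (prod_topology TG TZ) (action_domain TG s TZ p))
                (prod_topology TZ TZ) (\<lambda>(g, z). (act g z, z))"

definition G_compact ::
  "'g topology \<Rightarrow> ('g \<Rightarrow> 'g) \<Rightarrow> 'z topology \<Rightarrow> ('z \<Rightarrow> 'g) \<Rightarrow> ('g \<Rightarrow> 'z \<Rightarrow> 'z) \<Rightarrow> bool" where
  "G_compact TG s TZ p act \<longleftrightarrow>
     (\<exists>C. compactin TZ C \<and>
          topspace TZ = {act g z | g z. z \<in> C \<and> (g, z) \<in> action_domain TG s TZ p})"

text \<open>Finitely supported probability measures are represented by their mass function
  'g \<Rightarrow> real.  P_K(G): support in one range fibre with \<gamma>1\<inverse>\<gamma>2 \<in> K.\<close>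

definition msupp :: "('g \<Rightarrow> real) \<Rightarrow> 'g set" where
  "msupp \<mu> = {\<gamma>. \<mu> \<gamma> \<noteq> 0}"

definition PK ::
  "'g topology \<Rightarrow> ('g \<Rightarrow> 'g) \<Rightarrow> ('g \<Rightarrow> 'g \<Rightarrow> 'g) \<Rightarrow> ('g \<Rightarrow> 'g) \<Rightarrow> 'g set \<Rightarrow> ('g \<Rightarrow> real) set" where
  "PK TG r gmul ginv K =
     {\<mu>. finite (msupp \<mu>) \<and> msupp \<mu> \<subseteq> topspace TG \<and> (\<forall>\<gamma>. 0 \<le> \<mu> \<gamma>) \<and>
         sum \<mu> (msupp \<mu>) = 1 \<and>
         (\<forall>\<gamma>1\<in>msupp \<mu>. \<forall>\<gamma>2\<in>msupp \<mu>. r \<gamma>1 = r \<gamma>2 \<and> gmul (ginv \<gamma>1) \<gamma>2 \<in> K)}"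

definition Cc :: "'g topology \<Rightarrow> ('g \<Rightarrow> real) set" where
  "Cc TG = {f. continuous_map TG euclideanreal f \<and>
              compactin TG (TG closure_of {x \<in> topspace TG. f x \<noteq> 0}) \<and>
              (\<forall>x. x \<notin> topspace TG \<longrightarrow> f x = 0)}"

definition pairing :: "('g \<Rightarrow> real) \<Rightarrow> ('g \<Rightarrow> real) \<Rightarrow> real" where
  "pairing \<mu> f = (\<Sum>\<gamma>\<in>msupp \<mu>. \<mu> \<gamma> * f \<gamma>)"

text \<open>Weak-* topology (initial topology of \<mu> \<mapsto> \<integral> f d\<mu>, f \<in> C_c(G,R)) on P_K(G).\<close>

definition PK_top ::
  "'g topology \<Rightarrow> ('g \<Rightarrow> 'g) \<Rightarrow> ('g \<Rightarrow> 'g \<Rightarrow> 'g) \<Rightarrow> ('g \<Rightarrow> 'g) \<Rightarrow> 'g set \<Rightarrow> ('g \<Rightarrow> real) topology" where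
  "PK_top TG r gmul ginv K =
     pullback_topology (PK TG r gmul ginv K)
       (\<lambda>\<mu>. restrict (pairing \<mu>) (Cc TG))
       (product_topology (\<lambda>_. euclideanreal) (Cc TG))"

definition translate ::
  "'g topology \<Rightarrow> ('g \<Rightarrow> 'g) \<Rightarrow> ('g \<Rightarrow> 'g \<Rightarrow> 'g) \<Rightarrow> ('g \<Rightarrow> 'g) \<Rightarrow> 'g \<Rightarrow> ('g \<Rightarrow> real) \<Rightarrow> ('g \<Rightarrow> real)" where
  "translate TG r gmul ginv \<gamma> \<mu> =
     (\<lambda>\<eta>. if \<eta> \<in> topspace TG \<and> r \<eta> = r \<gamma> then \<mu> (gmul (ginv \<gamma>) \<eta>) else 0)"

definition iota :: "('g \<Rightarrow> real) \<Rightarrow> ('g \<Rightarrow> real)" where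
  "iota \<mu> = \<mu>"

end

(* Choose a compact C with Z = G C. A point of a support is detected by pairing with a
   nonnegative compactly supported bump function, so finitely many bumps show that the supports
   of phi_i(c), c \<in> C, all meet one compact set L_i; being in P_{K_i}, they then lie in the
   compact set L_i K_i. Equivariance transports this to every z = g c: the supports of phi_1(z)
   and phi_2(z) lie in g A for A = L_1 K_1 \<union> L_2 K_2, so any two of their points differ by an
   element of K = K_1 \<union> K_2 \<union> A^-1 A. Hence the straight-line homotopy (1 - t) phi_1 + t phi_2
   stays in P_K(G), and it is equivariant because translation is linear. *)

theory Submission
  imports Defs
begin

locale groupoid =
  fixes TG :: "'g topology" and r s :: "'g \<Rightarrow> 'g" and gmul :: "'g \<Rightarrow> 'g \<Rightarrow> 'g" and ginv :: "'g \<Rightarrow> 'g"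
  assumes groupoid_axioms: "groupoid_axioms TG r s gmul ginv"
begin

lemma r_mem [simp]: "g \<in> topspace TG \<Longrightarrow> r g \<in> topspace TG"
  and s_mem [simp]: "g \<in> topspace TG \<Longrightarrow> s g \<in> topspace TG"
  and inv_mem [simp]: "g \<in> topspace TG \<Longrightarrow> ginv g \<in> topspace TG"
  and s_r [simp]: "g \<in> topspace TG \<Longrightarrow> s (r g) = r g"
  and unit_left [simp]: "g \<in> topspace TG \<Longrightarrow> gmul (r g) g = g"
  and unit_right [simp]: "g \<in> topspace TG \<Longrightarrow> gmul g (s g) = g"
  and r_inv [simp]: "g \<in> topspace TG \<Longrightarrow> r (ginv g) = s g"
  and s_inv [simp]: "g \<in> topspace TG \<Longrightarrow> s (ginv g) = r g"
  and mul_inv_right [simp]: "g \<in> topspace TG \<Longrightarrow> gmul g (ginv g) = r g"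
  and mul_inv_left [simp]: "g \<in> topspace TG \<Longrightarrow> gmul (ginv g) g = s g"
  using groupoid_axioms unfolding groupoid_axioms_def by blast+

lemma mul_mem [simp]: "\<lbrakk>g \<in> topspace TG; h \<in> topspace TG; s g = r h\<rbrakk> \<Longrightarrow> gmul g h \<in> topspace TG"
  and r_mul [simp]: "\<lbrakk>g \<in> topspace TG; h \<in> topspace TG; s g = r h\<rbrakk> \<Longrightarrow> r (gmul g h) = r g"
  and s_mul [simp]: "\<lbrakk>g \<in> topspace TG; h \<in> topspace TG; s g = r h\<rbrakk> \<Longrightarrow> s (gmul g h) = s h"
  using groupoid_axioms unfolding groupoid_axioms_def by blast+

lemma mul_assoc:
  "\<lbrakk>g \<in> topspace TG; h \<in> topspace TG; k \<in> topspace TG; s g = r h; s h = r k\<rbrakk>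
    \<Longrightarrow> gmul (gmul g h) k = gmul g (gmul h k)"
  using groupoid_axioms unfolding groupoid_axioms_def by blast

lemma mul_inv_cancel_left:
  assumes "g \<in> topspace TG" "\<eta> \<in> topspace TG" "r \<eta> = r g"
  shows "gmul g (gmul (ginv g) \<eta>) = \<eta>"
  using assms mul_assoc[of g "ginv g" \<eta>] unit_left[of \<eta>] by simp

lemma inv_mul_cancel_left:
  assumes "g \<in> topspace TG" "\<eta> \<in> topspace TG" "s g = r \<eta>"
  shows "gmul (ginv g) (gmul g \<eta>) = \<eta>"
  using assms mul_assoc[of "ginv g" g \<eta>] by simp

lemma inv_unique:
  assumes "g \<in> topspace TG" "h \<in> topspace TG" "s g = r h" "gmul g h = r g"
  shows "ginv g = h"
  using assms inv_mul_cancel_left[of g h] unit_right[of "ginv g"] by simp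

lemma inv_inv [simp]: "g \<in> topspace TG \<Longrightarrow> ginv (ginv g) = g"
  by (rule inv_unique) simp_all

lemma inv_mul_distrib:
  assumes a: "a \<in> topspace TG" and b: "b \<in> topspace TG" and ab: "s a = r b"
  shows "ginv (gmul a b) = gmul (ginv b) (ginv a)"
proof (rule inv_unique)
  have "gmul (gmul a b) (gmul (ginv b) (ginv a)) = gmul a (gmul b (gmul (ginv b) (ginv a)))"
    using a b ab mul_assoc[of a b "gmul (ginv b) (ginv a)"] by simp
  also have "\<dots> = gmul a (ginv a)"
    using a b ab mul_inv_cancel_left[of b "ginv a"] by simp
  finally show "gmul (gmul a b) (gmul (ginv b) (ginv a)) = r (gmul a b)"
    using a b ab by simp
qed (use a b ab in simp_all)

lemma inv_mul_translate:
  assumes "g \<in> topspace TG" "\<eta>1 \<in> topspace TG" "\<eta>2 \<in> topspace TG" "r \<eta>1 = r g" "r \<eta>2 = r g"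
  shows "gmul (ginv (gmul (ginv g) \<eta>1)) (gmul (ginv g) \<eta>2) = gmul (ginv \<eta>1) \<eta>2"
  using assms inv_mul_distrib[of "ginv g" \<eta>1] mul_inv_cancel_left[of g \<eta>2]
    mul_assoc[of "ginv \<eta>1" g "gmul (ginv g) \<eta>2"] by simp

definition setmul :: "'g set \<Rightarrow> 'g set \<Rightarrow> 'g set" where
  "setmul A B = (\<lambda>(a, b). gmul a b) ` ((A \<times> B) \<inter> composable TG r s)"

lemma mul_mem_setmul:
  "\<lbrakk>a \<in> A; b \<in> B; a \<in> topspace TG; b \<in> topspace TG; s a = r b\<rbrakk> \<Longrightarrow> gmul a b \<in> setmul A B"
  unfolding setmul_def composable_def by force

lemma compactin_setmul:
  assumes "Hausdorff_space TG" "continuous_map TG TG r" "continuous_map TG TG s"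
    and mul: "continuous_map (subtopology (prod_topology TG TG) (composable TG r s)) TG (\<lambda>(g, h). gmul g h)"
    and "compactin TG A" "compactin TG B"
  shows "compactin TG (setmul A B)"
proof -
  have "composable TG r s = {x \<in> topspace (prod_topology TG TG). (s \<circ> fst) x = (r \<circ> snd) x}"
    by (auto simp: composable_def)
  also have "closedin (prod_topology TG TG) \<dots>"
    using assms continuous_map_compose[OF continuous_map_fst] continuous_map_compose[OF continuous_map_snd]
    by (intro closedin_continuous_maps_eq) (auto simp: o_def)
  finally have "compactin (prod_topology TG TG) (composable TG r s \<inter> (A \<times> B))"
    using assms by (intro closed_Int_compactin) (auto simp: compactin_Times)
  then have "compactin (subtopology (prod_topology TG TG) (composable TG r s)) ((A \<times> B) \<inter> composable TG r s)"
    by (simp add: compactin_subtopology Int_commute)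
  from image_compactin[OF this mul] show ?thesis
    unfolding setmul_def .
qed

lemma inv_mul_mem_setmul:
  assumes "g \<in> topspace TG"
    and "\<eta>1 \<in> topspace TG" "r \<eta>1 = r g" "gmul (ginv g) \<eta>1 \<in> A"
    and "\<eta>2 \<in> topspace TG" "r \<eta>2 = r g" "gmul (ginv g) \<eta>2 \<in> A"
  shows "gmul (ginv \<eta>1) \<eta>2 \<in> setmul (ginv ` A) A"
  using assms mul_mem_setmul[of "ginv (gmul (ginv g) \<eta>1)" "ginv ` A" "gmul (ginv g) \<eta>2" A]
  by (simp add: inv_mul_translate)

end

lemma PK_memD:
  assumes "\<mu> \<in> PK TG r gmul ginv K"
  shows "finite (msupp \<mu>)" "msupp \<mu> \<subseteq> topspace TG" "\<And>\<gamma>. 0 \<le> \<mu> \<gamma>" "sum \<mu> (msupp \<mu>) = 1"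
    and "\<And>\<gamma>1 \<gamma>2. \<lbrakk>\<gamma>1 \<in> msupp \<mu>; \<gamma>2 \<in> msupp \<mu>\<rbrakk> \<Longrightarrow> r \<gamma>1 = r \<gamma>2 \<and> gmul (ginv \<gamma>1) \<gamma>2 \<in> K"
  using assms unfolding PK_def by blast+

lemma topspace_PK_top [simp]: "topspace (PK_top TG r gmul ginv K) = PK TG r gmul ginv K"
  by (auto simp: PK_top_def topspace_pullback_topology)

lemma continuous_map_PK_top_iff:
  "continuous_map X (PK_top TG r gmul ginv K) \<phi> \<longleftrightarrow>
     \<phi> ` topspace X \<subseteq> PK TG r gmul ginv K \<and>
     (\<forall>f\<in>Cc TG. continuous_map X euclideanreal (\<lambda>x. pairing (\<phi> x) f))"
  (is "?lhs \<longleftrightarrow> ?rhs")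
proof
  assume ?lhs
  have "continuous_map X euclideanreal (((\<lambda>F. F f) \<circ> (\<lambda>\<mu>. restrict (pairing \<mu>) (Cc TG))) \<circ> \<phi>)"
    if "f \<in> Cc TG" for f
    using \<open>?lhs\<close> continuous_map_product_projection[OF that, of "\<lambda>_. euclideanreal"]
    unfolding PK_top_def by (blast intro: continuous_map_compose)
  then show ?rhs
    using \<open>?lhs\<close> continuous_map_image_subset_topspace[OF \<open>?lhs\<close>] by (simp add: o_def)
next
  assume ?rhs
  then show ?lhs
    unfolding PK_top_def
    by (intro continuous_map_pullback') (auto simp: continuous_map_componentwise o_def)
qed

lemma continuous_map_pairing:
  "\<lbrakk>continuous_map X (PK_top TG r gmul ginv K) \<phi>; f \<in> Cc TG\<rbrakk>
    \<Longrightarrow> continuous_map X euclideanreal (\<lambda>x. pairing (\<phi> x) f)"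
  by (simp add: continuous_map_PK_top_iff)

lemma exists_nonneg_Cc_pos_at:
  assumes lc: "locally_compact_space X" and H: "Hausdorff_space X" and x: "x \<in> topspace X"
  obtains f where "f \<in> Cc X" "0 < f x" "\<And>y. 0 \<le> f y"
proof -
  obtain U L where U: "openin X U" and L: "compactin X L" "closedin X L" and "x \<in> U" "U \<subseteq> L"
    using lc H x by (metis locally_compact_space_compact_closedin)
  have "completely_regular_space X"
    using lc H by (simp add: locally_compact_regular_imp_completely_regular_space)
  moreover have "disjnt {x} (topspace X - U)"
    using \<open>x \<in> U\<close> by simp
  ultimately obtain h where h: "continuous_map X (top_of_set {0..1::real}) h"
    and h0: "h ` (topspace X - U) \<subseteq> {0}" and h1: "h ` {x} \<subseteq> {1}"
    using U x Urysohn_completely_regular_compact_closed[of 0 1 X "{x}" "topspace X - U"]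
    by auto
  define f where "f y = (if y \<in> topspace X then h y else 0)" for y
  have "continuous_map X euclideanreal f"
    using continuous_map_into_fulltopology[OF h] by (rule continuous_map_eq) (simp add: f_def)
  moreover have "{y \<in> topspace X. f y \<noteq> 0} \<subseteq> L"
    using h0 \<open>U \<subseteq> L\<close> by (force simp: f_def)
  then have "compactin X (X closure_of {y \<in> topspace X. f y \<noteq> 0})"
    using L by (meson closed_compactin closedin_closure_of closure_of_minimal)
  ultimately have "f \<in> Cc X"
    by (simp add: Cc_def f_def)
  moreover have "0 \<le> f y" for y
    using continuous_map_image_subset_topspace[OF h] by (force simp: f_def)
  ultimately show thesis
    using that h1 x by (simp add: f_def)
qed

lemma exists_Cc_pairing_pos:
  assumes lc: "locally_compact_space TG" and H: "Hausdorff_space TG"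
    and \<mu>: "\<mu> \<in> PK TG r gmul ginv K"
  obtains f where "f \<in> Cc TG" "0 < pairing \<mu> f"
proof -
  note \<mu> = PK_memD[OF \<mu>]
  then obtain \<gamma> where \<gamma>: "\<gamma> \<in> msupp \<mu>"
    by fastforce
  then obtain f where f: "f \<in> Cc TG" "0 < f \<gamma>" "\<And>y. 0 \<le> f y"
    using exists_nonneg_Cc_pos_at[OF lc H] \<mu>(2) by blast
  have "0 < \<mu> \<gamma> * f \<gamma>"
    using \<gamma> f \<mu>(3) by (simp add: msupp_def order_less_le)
  also have "\<dots> \<le> pairing \<mu> f"
    unfolding pairing_def using \<gamma> f \<mu> by (intro member_le_sum) auto
  finally show thesis
    using that f by blast
qed

lemma msupp_meets_support_if_pairing_nonzero:
  assumes "msupp \<mu> \<subseteq> topspace TG" "pairing \<mu> f \<noteq> 0"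
  shows "msupp \<mu> \<inter> TG closure_of {\<gamma> \<in> topspace TG. f \<gamma> \<noteq> 0} \<noteq> {}"
proof -
  obtain \<gamma> where "\<gamma> \<in> msupp \<mu>" "\<mu> \<gamma> * f \<gamma> \<noteq> 0"
    using assms(2) sum.neutral[of "msupp \<mu>" "\<lambda>\<gamma>. \<mu> \<gamma> * f \<gamma>"] unfolding pairing_def by blast
  with assms(1) show ?thesis
    using closure_of_subset[of "{\<gamma> \<in> topspace TG. f \<gamma> \<noteq> 0}" TG] by auto
qed

lemma exists_compact_meeting_supports:
  assumes lc: "locally_compact_space TG" and H: "Hausdorff_space TG"
    and \<phi>: "continuous_map X (PK_top TG r gmul ginv K) \<phi>" and C: "compactin X C"
  obtains L where "compactin TG L" "\<And>z. z \<in> C \<Longrightarrow> msupp (\<phi> z) \<inter> L \<noteq> {}"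
proof -
  define N where "N f = {z \<in> topspace X. pairing (\<phi> z) f \<noteq> 0}" for f
  define S where "S f = TG closure_of {\<gamma> \<in> topspace TG. f \<gamma> \<noteq> (0::real)}" for f
  have \<phi>_PK: "\<phi> z \<in> PK TG r gmul ginv K" if "z \<in> topspace X" for z
    using continuous_map_image_subset_topspace[OF \<phi>] that by auto
  have "openin X (N f)" if "f \<in> Cc TG" for f
    using openin_continuous_map_preimage[OF continuous_map_pairing[OF \<phi> that], of "- {0}"]
    by (simp add: N_def open_Compl)
  moreover have "C \<subseteq> \<Union> (N ` Cc TG)"
  proof
    fix z assume "z \<in> C"
    then have z: "z \<in> topspace X"
      using C compactin_subset_topspace by blast
    obtain f where "f \<in> Cc TG" "0 < pairing (\<phi> z) f"
      using exists_Cc_pairing_pos[OF lc H \<phi>_PK[OF z]] .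
    with z show "z \<in> \<Union> (N ` Cc TG)"
      unfolding N_def by force
  qed
  ultimately obtain \<N> where "finite \<N>" "\<N> \<subseteq> N ` Cc TG" "C \<subseteq> \<Union> \<N>"
    using C unfolding compactin_def by (metis imageE)
  then obtain F where F: "finite F" "F \<subseteq> Cc TG" "C \<subseteq> \<Union> (N ` F)"
    by (metis finite_subset_image)
  have "compactin TG (\<Union> (S ` F))"
    using F by (intro compactin_Union) (auto simp: S_def Cc_def)
  moreover have "msupp (\<phi> z) \<inter> \<Union> (S ` F) \<noteq> {}" if "z \<in> C" for z
  proof -
    obtain f where "f \<in> F" "z \<in> N f"
      using F \<open>z \<in> C\<close> by blast
    then have "z \<in> topspace X" "pairing (\<phi> z) f \<noteq> 0"
      by (simp_all add: N_def)
    then have "msupp (\<phi> z) \<inter> S f \<noteq> {}"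
      unfolding S_def by (intro msupp_meets_support_if_pairing_nonzero PK_memD(2)[OF \<phi>_PK])
    with \<open>f \<in> F\<close> show ?thesis
      by blast
  qed
  ultimately show thesis
    using that by blast
qed

lemma pairing_eq_sum:
  assumes "finite T" "msupp \<mu> \<subseteq> T"
  shows "pairing \<mu> f = (\<Sum>\<gamma>\<in>T. \<mu> \<gamma> * f \<gamma>)"
  unfolding pairing_def using assms by (intro sum.mono_neutral_left) (auto simp: msupp_def)

definition convex_comb :: "real \<Rightarrow> ('g \<Rightarrow> real) \<Rightarrow> ('g \<Rightarrow> real) \<Rightarrow> 'g \<Rightarrow> real" where
  "convex_comb t \<mu> \<nu> = (\<lambda>\<gamma>. (1 - t) * \<mu> \<gamma> + t * \<nu> \<gamma>)"

lemma convex_comb_0 [simp]: "convex_comb 0 \<mu> \<nu> = \<mu>"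
  and convex_comb_1 [simp]: "convex_comb 1 \<mu> \<nu> = \<nu>"
  by (simp_all add: convex_comb_def)

lemma msupp_convex_comb: "msupp (convex_comb t \<mu> \<nu>) \<subseteq> msupp \<mu> \<union> msupp \<nu>"
  by (auto simp: msupp_def convex_comb_def)

lemma pairing_convex_comb:
  assumes "finite (msupp \<mu>)" "finite (msupp \<nu>)"
  shows "pairing (convex_comb t \<mu> \<nu>) f = (1 - t) * pairing \<mu> f + t * pairing \<nu> f"
proof -
  let ?U = "msupp \<mu> \<union> msupp \<nu>"
  have "pairing (convex_comb t \<mu> \<nu>) f = (\<Sum>\<gamma>\<in>?U. convex_comb t \<mu> \<nu> \<gamma> * f \<gamma>)"
    using assms by (intro pairing_eq_sum msupp_convex_comb) simp
  also have "\<dots> = (\<Sum>\<gamma>\<in>?U. (1 - t) * (\<mu> \<gamma> * f \<gamma>) + t * (\<nu> \<gamma> * f \<gamma>))"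
    by (simp add: convex_comb_def algebra_simps)
  also have "\<dots> = (1 - t) * pairing \<mu> f + t * pairing \<nu> f"
    using assms by (simp add: sum.distrib sum_distrib_left pairing_eq_sum[of ?U])
  finally show ?thesis .
qed

lemma translate_convex_comb:
  "translate TG r gmul ginv g (convex_comb t \<mu> \<nu>) =
     convex_comb t (translate TG r gmul ginv g \<mu>) (translate TG r gmul ginv g \<nu>)"
  by (simp add: translate_def convex_comb_def fun_eq_iff)

lemma convex_comb_mem_PK:
  assumes \<mu>: "\<mu> \<in> PK TG r gmul ginv K1" and \<nu>: "\<nu> \<in> PK TG r gmul ginv K2" and t: "t \<in> {0..1}"
    and fibre: "\<And>\<gamma>1 \<gamma>2. \<lbrakk>\<gamma>1 \<in> msupp \<mu> \<union> msupp \<nu>; \<gamma>2 \<in> msupp \<mu> \<union> msupp \<nu>\<rbrakk>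
                  \<Longrightarrow> r \<gamma>1 = r \<gamma>2 \<and> gmul (ginv \<gamma>1) \<gamma>2 \<in> K"
  shows "convex_comb t \<mu> \<nu> \<in> PK TG r gmul ginv K"
proof -
  let ?\<rho> = "convex_comb t \<mu> \<nu>"
  have fin: "finite (msupp \<mu>)" "finite (msupp \<nu>)"
    using PK_memD(1) \<mu> \<nu> by blast+
  have mass: "sum \<rho> (msupp \<rho>) = pairing \<rho> (\<lambda>_. 1)" for \<rho> :: "'a \<Rightarrow> real"
    by (simp add: pairing_def)
  have "finite (msupp ?\<rho>)"
    by (rule finite_subset[OF msupp_convex_comb]) (simp add: fin)
  moreover have "msupp ?\<rho> \<subseteq> topspace TG"
    using msupp_convex_comb[of t \<mu> \<nu>] PK_memD(2)[OF \<mu>] PK_memD(2)[OF \<nu>] by blast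
  moreover have "0 \<le> ?\<rho> \<gamma>" for \<gamma>
    using t PK_memD(3)[OF \<mu>] PK_memD(3)[OF \<nu>] by (simp add: convex_comb_def)
  moreover have "sum ?\<rho> (msupp ?\<rho>) = 1"
    using PK_memD(4)[OF \<mu>] PK_memD(4)[OF \<nu>] by (simp add: mass pairing_convex_comb fin)
  ultimately show ?thesis
    unfolding PK_def using fibre msupp_convex_comb[of t \<mu> \<nu>] by blast
qed

lemma continuous_map_convex_comb_PK_top:
  assumes \<phi>1: "continuous_map X (PK_top TG r gmul ginv K1) \<phi>1"
    and \<phi>2: "continuous_map X (PK_top TG r gmul ginv K2) \<phi>2"
    and fibre: "\<And>z \<gamma>1 \<gamma>2. \<lbrakk>z \<in> topspace X; \<gamma>1 \<in> msupp (\<phi>1 z) \<union> msupp (\<phi>2 z); \<gamma>2 \<in> msupp (\<phi>1 z) \<union> msupp (\<phi>2 z)\<rbrakk>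
                  \<Longrightarrow> r \<gamma>1 = r \<gamma>2 \<and> gmul (ginv \<gamma>1) \<gamma>2 \<in> K"
  shows "continuous_map (prod_topology (top_of_set {0..1}) X) (PK_top TG r gmul ginv K)
           (\<lambda>(t, z). convex_comb t (\<phi>1 z) (\<phi>2 z))"
  unfolding continuous_map_PK_top_iff
proof (intro conjI ballI)
  have PK1: "\<phi>1 z \<in> PK TG r gmul ginv K1" and PK2: "\<phi>2 z \<in> PK TG r gmul ginv K2"
    if "z \<in> topspace X" for z
    using that continuous_map_image_subset_topspace[OF \<phi>1] continuous_map_image_subset_topspace[OF \<phi>2]
    by auto
  show "(\<lambda>(t, z). convex_comb t (\<phi>1 z) (\<phi>2 z)) ` topspace (prod_topology (top_of_set {0..1}) X)
          \<subseteq> PK TG r gmul ginv K"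
  proof (rule image_subsetI, clarify)
    fix t :: real and z assume "(t, z) \<in> topspace (prod_topology (top_of_set {0..1}) X)"
    then have t: "t \<in> {0..1}" and z: "z \<in> topspace X"
      by auto
    show "convex_comb t (\<phi>1 z) (\<phi>2 z) \<in> PK TG r gmul ginv K"
      by (rule convex_comb_mem_PK[OF PK1[OF z] PK2[OF z] t fibre[OF z]])
  qed
  fix f assume f: "f \<in> Cc TG"
  have "continuous_map (prod_topology (top_of_set {0..1}) X) euclideanreal
          (\<lambda>(t, z). (1 - t) * pairing (\<phi>1 z) f + t * pairing (\<phi>2 z) f)"
    using continuous_map_into_fulltopology[OF continuous_map_fst]
      continuous_map_compose[OF continuous_map_snd continuous_map_pairing[OF \<phi>1 f]]
      continuous_map_compose[OF continuous_map_snd continuous_map_pairing[OF \<phi>2 f]]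
    unfolding case_prod_unfold o_def
    by (intro continuous_map_add continuous_map_real_mult continuous_map_diff continuous_map_const[THEN iffD2]) auto
  then show "continuous_map (prod_topology (top_of_set {0..1}) X) euclideanreal
          (\<lambda>x. pairing ((\<lambda>(t, z). convex_comb t (\<phi>1 z) (\<phi>2 z)) x) f)"
    by (rule continuous_map_eq) (auto simp: pairing_convex_comb PK_memD(1)[OF PK1] PK_memD(1)[OF PK2])
qed

lemma msupp_translate:
  "msupp (translate TG r gmul ginv g \<mu>) = {\<eta> \<in> topspace TG. r \<eta> = r g \<and> gmul (ginv g) \<eta> \<in> msupp \<mu>}"
  by (auto simp: msupp_def translate_def)

context groupoid
begin

lemma msupp_subset_setmul:
  assumes \<mu>: "\<mu> \<in> PK TG r gmul ginv K" and "K \<subseteq> topspace TG" and "\<gamma> \<in> msupp \<mu>" "\<gamma> \<in> L"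
  shows "msupp \<mu> \<subseteq> setmul L K"
proof
  fix \<eta> assume \<eta>: "\<eta> \<in> msupp \<mu>"
  have "r \<gamma> = r \<eta> \<and> gmul (ginv \<gamma>) \<eta> \<in> K"
    by (rule PK_memD(5)[OF \<mu> \<open>\<gamma> \<in> msupp \<mu>\<close> \<eta>])
  moreover have "\<gamma> \<in> topspace TG" "\<eta> \<in> topspace TG"
    using PK_memD(2)[OF \<mu>] \<open>\<gamma> \<in> msupp \<mu>\<close> \<eta> by (simp_all add: subset_iff)
  ultimately show "\<eta> \<in> setmul L K"
    using \<open>\<gamma> \<in> L\<close> mul_mem_setmul[of \<gamma> L "gmul (ginv \<gamma>) \<eta>" K] mul_inv_cancel_left[of \<gamma> \<eta>] by simp
qed

lemma exists_compact_bounding_supports: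
  assumes et: "etale_groupoid TG r s gmul ginv" and K: "compactin TG K"
    and \<phi>: "continuous_map X (PK_top TG r gmul ginv K) \<phi>" and C: "compactin X C"
  obtains A where "compactin TG A" "\<And>c. c \<in> C \<Longrightarrow> msupp (\<phi> c) \<subseteq> A"
proof -
  obtain L where L: "compactin TG L" "\<And>z. z \<in> C \<Longrightarrow> msupp (\<phi> z) \<inter> L \<noteq> {}"
    using exists_compact_meeting_supports[OF _ _ \<phi> C] et unfolding etale_groupoid_def by blast
  have "compactin TG (setmul L K)"
    using et L K unfolding etale_groupoid_def by (intro compactin_setmul) auto
  moreover have "msupp (\<phi> c) \<subseteq> setmul L K" if "c \<in> C" for c
  proof -
    have "\<phi> c \<in> PK TG r gmul ginv K"
      using that C \<phi> compactin_subset_topspace continuous_map_image_subset_topspace by fastforce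
    with L(2)[OF that] show ?thesis
      using K compactin_subset_topspace msupp_subset_setmul by blast
  qed
  ultimately show thesis
    using that by blast
qed

lemma inv_mul_mem_setmul_equivariant:
  assumes Z: "topspace X = {act g c | g c. c \<in> C \<and> (g, c) \<in> action_domain TG s X p}"
    and S: "\<And>g c. (g, c) \<in> action_domain TG s X p \<Longrightarrow>
              S (act g c) = {\<eta> \<in> topspace TG. r \<eta> = r g \<and> gmul (ginv g) \<eta> \<in> S c}"
    and A: "\<And>c. c \<in> C \<Longrightarrow> S c \<subseteq> A"
    and z: "z \<in> topspace X" and \<gamma>: "\<gamma>1 \<in> S z" "\<gamma>2 \<in> S z"
  shows "r \<gamma>1 = r \<gamma>2 \<and> gmul (ginv \<gamma>1) \<gamma>2 \<in> setmul (ginv ` A) A"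
proof -
  obtain g c where zgc: "z = act g c" and "c \<in> C" and gc: "(g, c) \<in> action_domain TG s X p"
    using z Z by blast
  have g: "g \<in> topspace TG"
    using gc by (simp add: action_domain_def)
  have "S z \<subseteq> {\<eta> \<in> topspace TG. r \<eta> = r g \<and> gmul (ginv g) \<eta> \<in> A}"
    using A[OF \<open>c \<in> C\<close>] unfolding zgc S[OF gc] by blast
  with \<gamma> have "\<gamma>1 \<in> topspace TG" "r \<gamma>1 = r g" "gmul (ginv g) \<gamma>1 \<in> A"
    and "\<gamma>2 \<in> topspace TG" "r \<gamma>2 = r g" "gmul (ginv g) \<gamma>2 \<in> A"
    by blast+
  then show ?thesis
    using inv_mul_mem_setmul[OF g] by simp
qed

end

theorem proposition3p29:
  fixes TG :: "'g topology" and r s ginv :: "'g \<Rightarrow> 'g" and gmul :: "'g \<Rightarrow> 'g \<Rightarrow> 'g"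
    and TZ :: "'z topology" and p :: "'z \<Rightarrow> 'g" and act :: "'g \<Rightarrow> 'z \<Rightarrow> 'z"
    and K1 K2 :: "'g set" and \<phi>1 \<phi>2 :: "'z \<Rightarrow> ('g \<Rightarrow> real)"
  assumes "etale_groupoid TG r s gmul ginv"
    and "G_space TG r s gmul TZ p act"
    and "locally_compact_space TZ" and "Hausdorff_space TZ"
    and "proper_action TG s TZ p act"
    and "G_compact TG s TZ p act"
    and "compactin TG K1" and "compactin TG K2"
    and "continuous_map TZ (PK_top TG r gmul ginv K1) \<phi>1"
    and "\<forall>(g, z)\<in>action_domain TG s TZ p. \<phi>1 (act g z) = translate TG r gmul ginv g (\<phi>1 z)"
    and "continuous_map TZ (PK_top TG r gmul ginv K2) \<phi>2"
    and "\<forall>(g, z)\<in>action_domain TG s TZ p. \<phi>2 (act g z) = translate TG r gmul ginv g (\<phi>2 z)"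
  shows "\<exists>K. compactin TG K \<and> K1 \<union> K2 \<subseteq> K \<and>
           (\<exists>H :: real \<Rightarrow> 'z \<Rightarrow> ('g \<Rightarrow> real).
              continuous_map (prod_topology (top_of_set {0..1}) TZ) (PK_top TG r gmul ginv K)
                 (\<lambda>(t, z). H t z) \<and>
              (\<forall>t\<in>{0..1}. \<forall>(g, z)\<in>action_domain TG s TZ p.
                 H t (act g z) = translate TG r gmul ginv g (H t z)) \<and>
              (\<forall>z\<in>topspace TZ. H 0 z = iota (\<phi>1 z) \<and> H 1 z = iota (\<phi>2 z)))"
proof -
  interpret groupoid TG r s gmul ginv
    using assms(1) by unfold_locales (simp add: etale_groupoid_def)
  obtain C where C: "compactin TZ C"
    and Z: "topspace TZ = {act g c | g c. c \<in> C \<and> (g, c) \<in> action_domain TG s TZ p}"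
    using assms(6) unfolding G_compact_def by blast
  obtain A1 where A1: "compactin TG A1" "\<And>c. c \<in> C \<Longrightarrow> msupp (\<phi>1 c) \<subseteq> A1"
    using exists_compact_bounding_supports[OF assms(1,7,9) C] by blast
  obtain A2 where A2: "compactin TG A2" "\<And>c. c \<in> C \<Longrightarrow> msupp (\<phi>2 c) \<subseteq> A2"
    using exists_compact_bounding_supports[OF assms(1,8,11) C] by blast
  define A where "A = A1 \<union> A2"
  define K where "K = K1 \<union> K2 \<union> setmul (ginv ` A) A"
  have "compactin TG K"
    using assms(1,7,8) A1(1) A2(1) unfolding K_def A_def etale_groupoid_def
    by (intro compactin_Un compactin_setmul image_compactin[of TG _ TG ginv]) auto
  let ?S = "\<lambda>z. msupp (\<phi>1 z) \<union> msupp (\<phi>2 z)"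
  have S_equivariant: "?S (act g c) = {\<eta> \<in> topspace TG. r \<eta> = r g \<and> gmul (ginv g) \<eta> \<in> ?S c}"
    if "(g, c) \<in> action_domain TG s TZ p" for g c
    using bspec[OF assms(10) that] bspec[OF assms(12) that] by (auto simp: msupp_translate)
  have fibre: "r \<gamma>1 = r \<gamma>2 \<and> gmul (ginv \<gamma>1) \<gamma>2 \<in> K"
    if "z \<in> topspace TZ" "\<gamma>1 \<in> ?S z" "\<gamma>2 \<in> ?S z" for z \<gamma>1 \<gamma>2
    using inv_mul_mem_setmul_equivariant[OF Z S_equivariant _ that, of A] A1(2) A2(2)
    unfolding K_def A_def by blast
  show ?thesis
  proof (intro exI[of _ K] exI[of _ "\<lambda>t z. convex_comb t (\<phi>1 z) (\<phi>2 z)"] conjI)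
    show "continuous_map (prod_topology (top_of_set {0..1}) TZ) (PK_top TG r gmul ginv K)
            (\<lambda>(t, z). convex_comb t (\<phi>1 z) (\<phi>2 z))"
      using continuous_map_convex_comb_PK_top[OF assms(9,11) fibre] .
    show "\<forall>t\<in>{0..1}. \<forall>(g, z)\<in>action_domain TG s TZ p.
            convex_comb t (\<phi>1 (act g z)) (\<phi>2 (act g z)) =
            translate TG r gmul ginv g (convex_comb t (\<phi>1 z) (\<phi>2 z))"
      using assms(10,12) by (fastforce simp: translate_convex_comb)
  qed (use \<open>compactin TG K\<close> in \<open>auto simp: K_def iota_def\<close>)
qed

end
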